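(* Let $d\ge1$, $\nu>0$, $\sigma>0$, $a_1>0$, $a_2>0$. Let $\mathbf{X}$ be a centered Gaussian random vector in $\mathbb{R}^d$ with covariance $\sigma^2 I_d$ and $\mathbf{T}$ an independent random vector with Student density $f_\nu(\mathbf{t})=\frac{\Gamma(\nu+\frac d2)}{\Gamma(\nu)\pi^{d/2}}(1+\Vert\mathbf{t}\Vert^2)^{-\nu-\frac d2}$. Set $\tilde\gamma=\frac{a_2}{\sigma\sqrt2\,a_1}$. Then the density of $\tilde{\mathbf{Z}}=a_1\mathbf{X}+a_2\mathbf{T}$ is \[ f_{\tilde{\mathbf{Z}}}(\mathbf{z})=\sum_{k=0}^\infty \alpha_k^{(\nu,\tilde\gamma)}\,g_{k,a_1\sigma}(\mathbf{z}), \] with positive coefficients $\alpha_k^{(\nu,\tilde\gamma)}$ summing to $1$.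
   Context: For $k\in\mathbb{N}$ and $s>0$, $g_{k,s}(\mathbf{z})=\frac{\Gamma(\frac d2)}{\Gamma(k+\frac d2)(s\sqrt{2\pi})^d}\left(\frac{\Vert\mathbf{z}\Vert^2}{2s^2}\right)^k\exp\left(-\frac{\Vert\mathbf{z}\Vert^2}{2s^2}\right)$, $\mathbf{z}\in\mathbb{R}^d$. For $\gamma>0$, $\alpha_k^{(\nu,\gamma)}=\frac{\Gamma(k+\frac d2)}{k!\,\Gamma(\frac d2)\Gamma(\nu)}\gamma^{2k}\int_0^{\infty}e^{-a}a^{\nu+\frac d2-1}(a+\gamma^2)^{-k-\frac d2}\,da$. *)

theory Defs
  imports "HOL-Probability.Probability"
begin

text \<open>Dimension d is DIM('a) for the Euclidean space 'a (so d >= 1 automatically).\<close>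

definition gauss_density :: "real \<Rightarrow> 'a::euclidean_space \<Rightarrow> real" where
  "gauss_density \<sigma> x =
     exp (- (norm x)\<^sup>2 / (2 * \<sigma>\<^sup>2)) / (\<sigma> * sqrt (2 * pi)) ^ DIM('a)"

definition student_density :: "real \<Rightarrow> 'a::euclidean_space \<Rightarrow> real" where
  "student_density \<nu> t =
     Gamma (\<nu> + real DIM('a) / 2) / (Gamma \<nu> * pi powr (real DIM('a) / 2))
     * (1 + (norm t)\<^sup>2) powr (- \<nu> - real DIM('a) / 2)"

definition gk :: "nat \<Rightarrow> real \<Rightarrow> 'a::euclidean_space \<Rightarrow> real" where
  "gk k s z =
     Gamma (real DIM('a) / 2) / (Gamma (real k + real DIM('a) / 2) * (s * sqrt (2 * pi)) ^ DIM('a))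
     * ((norm z)\<^sup>2 / (2 * s\<^sup>2)) ^ k * exp (- (norm z)\<^sup>2 / (2 * s\<^sup>2))"

definition alpha :: "nat \<Rightarrow> real \<Rightarrow> real \<Rightarrow> nat \<Rightarrow> real" where
  "alpha d \<nu> \<gamma> k =
     Gamma (real k + real d / 2) / (fact k * Gamma (real d / 2) * Gamma \<nu>) * \<gamma> ^ (2 * k)
     * (LINT a:{0<..}|lborel. exp (- a) * a powr (\<nu> + real d / 2 - 1)
                                * (a + \<gamma>\<^sup>2) powr (- real k - real d / 2))"

end

theory Submission
  imports Defs
begin

text \<open>
  The Student density is a Gamma mixture of centred Gaussians: \<open>f\<^sub>\<nu>(t)\<close> is proportional to
  the integral over \<open>a > 0\<close> of \<open>a powr (\<nu> + d/2 - 1) * exp (-a) * exp (-a * \<bar>t\<bar>\<^sup>2)\<close>.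
  After Fubini, the density of \<open>a\<^sub>1 X + a\<^sub>2 T\<close> is therefore, for each mixing parameter \<open>a\<close>,
  a Gaussian integral, and completing the square gives the factor
  \<open>(\<pi> / (a + \<gamma>\<^sup>2)) powr (d/2) * exp (- r a / (a + \<gamma>\<^sup>2))\<close> with \<open>r = \<bar>z\<bar>\<^sup>2 / (2 a\<^sub>1\<^sup>2 \<sigma>\<^sup>2)\<close>.
  Writing \<open>exp (- r a / (a + \<gamma>\<^sup>2)) = exp (-r) * exp (r \<gamma>\<^sup>2 / (a + \<gamma>\<^sup>2))\<close>, expanding the second
  factor and integrating term by term (monotone convergence) yields exactly \<open>\<alpha>\<^sub>k * g\<^sub>k\<close>.
  That the \<open>\<alpha>\<^sub>k\<close> sum to one is the negative binomial series
  \<open>\<Sum>\<^sub>k \<Gamma>(k + d/2) / (k! \<Gamma>(d/2)) p\<^sup>k = (1 - p) powr (-d/2)\<close> at \<open>p = \<gamma>\<^sup>2 / (a + \<gamma>\<^sup>2)\<close>,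
  summed under the integral that defines \<open>\<alpha>\<^sub>k\<close>.
\<close>

section \<open>Gamma integrals\<close>

definition gamma_weight :: "real \<Rightarrow> real \<Rightarrow> real" where
  "gamma_weight x a = indicator {0<..} a * a powr (x - 1) * exp (- a)"

lemma gamma_weight_nonneg [simp]: "gamma_weight x a \<ge> 0"
  by (simp add: gamma_weight_def)

lemma borel_measurable_gamma_weight [measurable]: "gamma_weight x \<in> borel_measurable borel"
  unfolding gamma_weight_def[abs_def] by measurable

lemma nn_integral_gamma_weight_exp:
  fixes x c :: real
  assumes x: "x > 0" and c: "c \<ge> 0"
  shows "(\<integral>\<^sup>+a. ennreal (gamma_weight x a * exp (- c * a)) \<partial>lborel) = ennreal (Gamma x / (1 + c) powr x)"
proof -
  define l where "l = 1 + c"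
  have l: "l > 0" using c by (simp add: l_def)
  define I where "I = (\<integral>\<^sup>+a. ennreal (gamma_weight x a * exp (- c * a)) \<partial>lborel)"
  have "ennreal (Gamma x) = (\<integral>\<^sup>+t. ennreal (indicator {0..} t * t powr (x - 1) / exp t) \<partial>lborel)"
    using Gamma_conv_nn_integral_real[OF x] .
  also have "\<dots> = ennreal l * (\<integral>\<^sup>+a. ennreal (indicator {0..} (0 + l * a) * (0 + l * a) powr (x - 1) / exp (0 + l * a)) \<partial>lborel)"
    using l by (subst nn_integral_real_affine[where c=l and t=0]) auto
  also have "(\<integral>\<^sup>+a. ennreal (indicator {0..} (0 + l * a) * (0 + l * a) powr (x - 1) / exp (0 + l * a)) \<partial>lborel)
      = (\<integral>\<^sup>+a. ennreal (l powr (x - 1)) * ennreal (gamma_weight x a * exp (- c * a)) \<partial>lborel)"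
  proof (intro nn_integral_cong)
    fix a :: real
    have "exp (- a) * exp (- c * a) = exp (- (l * a))"
      by (simp add: l_def algebra_simps flip: exp_add)
    moreover have "l * a \<ge> 0 \<longleftrightarrow> a \<ge> 0"
      using l by (simp add: zero_le_mult_iff)
    ultimately show "ennreal (indicator {0..} (0 + l * a) * (0 + l * a) powr (x - 1) / exp (0 + l * a)) =
          ennreal (l powr (x - 1)) * ennreal (gamma_weight x a * exp (- c * a))"
      using l by (subst ennreal_mult[symmetric])
        (auto simp: gamma_weight_def powr_mult exp_minus indicator_def field_simps)
  qed
  also have "\<dots> = ennreal (l powr (x - 1)) * I"
    unfolding I_def by (rule nn_integral_cmult) auto
  finally have "ennreal (Gamma x) = (ennreal l * ennreal (l powr (x - 1))) * I"
    by (simp add: mult.assoc)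
  also have "ennreal l * ennreal (l powr (x - 1)) = ennreal (l powr x)"
    using l by (simp add: ennreal_mult[symmetric] powr_mult_base)
  finally have Gamma_eq: "ennreal (Gamma x) = ennreal (l powr x) * I" .
  have "ennreal (Gamma x / l powr x) = ennreal (1 / l powr x) * ennreal (Gamma x)"
    using l by (simp add: ennreal_mult'[symmetric])
  also have "\<dots> = (ennreal (1 / l powr x) * ennreal (l powr x)) * I"
    by (simp add: Gamma_eq mult.assoc)
  also have "ennreal (1 / l powr x) * ennreal (l powr x) = 1"
    using l by (simp add: ennreal_mult'[symmetric])
  finally show ?thesis by (simp add: I_def l_def)
qed

lemma nn_integral_gamma_weight:
  "x > 0 \<Longrightarrow> (\<integral>\<^sup>+a. ennreal (gamma_weight x a) \<partial>lborel) = ennreal (Gamma x)"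
  using nn_integral_gamma_weight_exp[of x 0] by simp

lemma nn_integral_gamma_weight_powr:
  fixes x g e :: real
  assumes x: "x > 0" and g: "g > 0" and e: "e \<le> 0"
  shows "(\<integral>\<^sup>+a. ennreal (gamma_weight x a * (a + g) powr e) \<partial>lborel)
       = ennreal (LINT a:{0<..}|lborel. exp (- a) * a powr (x - 1) * (a + g) powr e)"
proof -
  define F where "F a = gamma_weight x a * (a + g) powr e" for a
  have [measurable]: "F \<in> borel_measurable borel" unfolding F_def[abs_def] by measurable
  have "F a \<le> g powr e * gamma_weight x a" for a
  proof (cases "a > 0")
    case True
    then have "(a + g) powr e \<le> g powr e" using g e by (intro powr_mono2') auto
    then show ?thesis by (simp add: F_def mult_left_mono mult.commute)
  qed (simp add: F_def gamma_weight_def)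
  then have "(\<integral>\<^sup>+a. ennreal (F a) \<partial>lborel) \<le> (\<integral>\<^sup>+a. ennreal (g powr e) * ennreal (gamma_weight x a) \<partial>lborel)"
    by (intro nn_integral_mono) (simp add: ennreal_mult[symmetric])
  also have "\<dots> = ennreal (g powr e) * ennreal (Gamma x)"
    using x by (simp add: nn_integral_cmult nn_integral_gamma_weight)
  also have "\<dots> < \<infinity>" by (simp add: ennreal_mult_less_top)
  finally have "integrable lborel F"
    by (intro integrableI_bounded) (simp_all add: F_def)
  then have "(\<integral>\<^sup>+a. ennreal (F a) \<partial>lborel) = ennreal (integral\<^sup>L lborel F)"
    by (rule nn_integral_eq_integral) (simp add: F_def)
  moreover have "integral\<^sup>L lborel F = (LINT a:{0<..}|lborel. exp (- a) * a powr (x - 1) * (a + g) powr e)"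
    unfolding set_lebesgue_integral_def F_def gamma_weight_def by (simp add: mult_ac)
  ultimately show ?thesis by (simp add: F_def)
qed

lemma set_integral_gamma_weight_powr_pos:
  fixes x g e :: real
  assumes x: "x > 0" and g: "g > 0" and e: "e \<le> 0"
  shows "(LINT a:{0<..}|lborel. exp (- a) * a powr (x - 1) * (a + g) powr e) > 0"
proof -
  have "{0<..<1} \<subseteq> {a \<in> space lborel. ennreal (gamma_weight x a * (a + g) powr e) \<noteq> 0}"
    using g by (auto simp: gamma_weight_def)
  then have "emeasure lborel {0<..<(1::real)}
      \<le> emeasure lborel {a \<in> space lborel. ennreal (gamma_weight x a * (a + g) powr e) \<noteq> 0}"
    by (intro emeasure_mono) auto
  then have "(\<integral>\<^sup>+a. ennreal (gamma_weight x a * (a + g) powr e) \<partial>lborel) \<noteq> 0"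
    by (subst nn_integral_0_iff) auto
  then show ?thesis
    unfolding nn_integral_gamma_weight_powr[OF assms] by (metis ennreal_eq_0_iff not_le)
qed

section \<open>The mixing coefficients\<close>

lemma negative_binomial_sums:
  fixes p c :: real assumes p: "0 \<le> p" "p < 1" and c: "c > 0"
  shows "(\<lambda>k. Gamma (real k + c) / (fact k * Gamma c) * p ^ k) sums (1 - p) powr (- c)"
proof -
  have "(\<lambda>k. ((- c) gchoose k) * (- p) ^ k) sums (1 + (- p)) powr (- c)"
    by (rule gen_binomial_real) (use p in auto)
  moreover have "((- c) gchoose k) * (- p) ^ k = Gamma (real k + c) / (fact k * Gamma c) * p ^ k" for k
  proof -
    have c_nonpos_Ints: "c \<notin> \<int>\<^sub>\<le>\<^sub>0" using c by (auto elim!: nonpos_Ints_cases)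
    have gchoose_eq: "((- c) gchoose k) = (-1)^k * pochhammer c k / fact k"
      by (simp add: gbinomial_pochhammer)
    have sign: "(-1::real)^k * (-1)^k = 1" by (simp flip: power_add)
    have "((- c) gchoose k) * (- p) ^ k = ((-1)^k * (-1)^k) * (pochhammer c k / fact k) * p ^ k"
      unfolding gchoose_eq power_minus[of p]
      by (simp only: mult_ac times_divide_eq_right times_divide_eq_left)
    also have "\<dots> = pochhammer c k / fact k * p ^ k" by (simp only: sign mult_1_left)
    also have "pochhammer c k = Gamma (real k + c) / Gamma c"
      using pochhammer_Gamma[OF c_nonpos_Ints, of k] by (simp add: add.commute)
    finally show ?thesis by simp
  qed
  ultimately show ?thesis by simp
qed

lemma powr_exp_series_sums:
  fixes y w e :: real
  assumes y: "y > 0"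
  shows "(\<lambda>k. w ^ k / fact k * y powr (- real k - e)) sums (y powr (- e) * exp (w / y))"
proof -
  have "y powr (- real k - e) = y powr (- e) / y ^ k" for k
  proof -
    have "- real k - e = - e - real k" by simp
    then show ?thesis using y by (simp only: powr_diff powr_realpow)
  qed
  then have "w ^ k / fact k * y powr (- real k - e) = y powr (- e) * ((w / y) ^ k /\<^sub>R fact k)" for k
    by (simp add: power_divide divide_inverse power_mult_distrib power_inverse mult_ac)
  then show ?thesis by (simp only: sums_mult exp_converges)
qed

lemma gamma_weight_mixture_sums:
  fixes \<nu> h g a :: real
  assumes \<nu>: "\<nu> > 0" and h: "h > 0" and g: "g > 0"
  shows "(\<lambda>k. Gamma (real k + h) / (fact k * Gamma h) * g ^ k
            * (gamma_weight (\<nu> + h) a * (a + g) powr (- real k - h))) sums gamma_weight \<nu> a"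
proof (cases "a > 0")
  case a: True
  define p where "p = g / (a + g)"
  have ag: "a + g > 0" using a g by simp
  have p: "0 \<le> p" "p < 1" using a g by (auto simp: p_def)
  define M where "M = gamma_weight (\<nu> + h) a * (a + g) powr (- h)"
  have power_eq: "g ^ k * (a + g) powr (- real k - h) = (a + g) powr (- h) * p ^ k" for k
  proof -
    have "- real k - h = - h - real k" by simp
    then show ?thesis
      using ag by (simp only: powr_diff powr_realpow p_def power_divide) simp
  qed
  have term_eq: "Gamma (real k + h) / (fact k * Gamma h) * g ^ k * (gamma_weight (\<nu> + h) a * (a + g) powr (- real k - h))
      = M * (Gamma (real k + h) / (fact k * Gamma h) * p ^ k)" for k
    using power_eq[of k] by (simp add: M_def mult_ac)
  have limit_eq: "M * (1 - p) powr (- h) = gamma_weight \<nu> a"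
  proof -
    have "(1 - p) powr (- h) = a powr (- h) * (a + g) powr h"
      using a ag by (simp add: p_def diff_divide_eq_iff powr_divide powr_minus_divide field_simps)
    then have "M * (1 - p) powr (- h)
        = exp (- a) * (a powr (\<nu> + h - 1) * a powr (- h)) * ((a + g) powr (- h) * (a + g) powr h)"
      using a by (simp add: M_def gamma_weight_def mult_ac)
    also have "\<dots> = gamma_weight \<nu> a"
      using a ag by (simp add: gamma_weight_def flip: powr_add)
    finally show ?thesis .
  qed
  show ?thesis
    unfolding term_eq limit_eq[symmetric] by (rule sums_mult[OF negative_binomial_sums[OF p h]])
next
  case False
  then show ?thesis by (simp add: gamma_weight_def)
qed

lemma alpha_pos:
  fixes d :: nat and \<nu> \<gamma> :: real
  assumes d: "d > 0" and \<nu>: "\<nu> > 0" and \<gamma>: "\<gamma> > 0"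
  shows "alpha d \<nu> \<gamma> k > 0"
proof -
  have "(LINT a:{0<..}|lborel. exp (- a) * a powr (\<nu> + real d / 2 - 1) * (a + \<gamma>\<^sup>2) powr (- real k - real d / 2)) > 0"
    using \<nu> \<gamma> by (intro set_integral_gamma_weight_powr_pos) auto
  moreover have "Gamma (real k + real d / 2) > 0" "Gamma (real d / 2) > 0"
    using d by (auto intro!: Gamma_real_pos)
  ultimately show ?thesis
    unfolding alpha_def using \<nu> \<gamma> Gamma_real_pos[OF \<nu>] by simp
qed

lemma alpha_sums:
  fixes d :: nat and \<nu> \<gamma> :: real
  assumes d: "d > 0" and \<nu>: "\<nu> > 0" and \<gamma>: "\<gamma> > 0"
  shows "(\<lambda>k. alpha d \<nu> \<gamma> k) sums 1"
proof -
  define h where "h = real d / 2"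
  have h: "h > 0" using d by (simp add: h_def)
  have g: "\<gamma>\<^sup>2 > 0" using \<gamma> by simp
  define c where "c k = Gamma (real k + h) / (fact k * Gamma h) * (\<gamma>\<^sup>2) ^ k / Gamma \<nu>" for k
  have c: "c k \<ge> 0" for k
    using h \<nu> by (simp add: c_def Gamma_real_pos less_imp_le)
  have alpha_eq: "ennreal (alpha d \<nu> \<gamma> k)
      = (\<integral>\<^sup>+a. ennreal (c k * (gamma_weight (\<nu> + h) a * (a + \<gamma>\<^sup>2) powr (- real k - h))) \<partial>lborel)" for k
  proof -
    have "(\<integral>\<^sup>+a. ennreal (c k * (gamma_weight (\<nu> + h) a * (a + \<gamma>\<^sup>2) powr (- real k - h))) \<partial>lborel)
        = ennreal (c k) * (\<integral>\<^sup>+a. ennreal (gamma_weight (\<nu> + h) a * (a + \<gamma>\<^sup>2) powr (- real k - h)) \<partial>lborel)"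
      using c[of k] by (simp add: nn_integral_cmult ennreal_mult)
    also have "\<dots> = ennreal (alpha d \<nu> \<gamma> k)"
      using \<nu> h g c[of k] power_mult[of \<gamma> 2 k]
      by (simp add: nn_integral_gamma_weight_powr add_pos_pos ennreal_mult'[symmetric] alpha_def c_def h_def mult_ac)
    finally show ?thesis ..
  qed
  have "(\<Sum>k. ennreal (alpha d \<nu> \<gamma> k))
      = (\<integral>\<^sup>+a. (\<Sum>k. ennreal (c k * (gamma_weight (\<nu> + h) a * (a + \<gamma>\<^sup>2) powr (- real k - h)))) \<partial>lborel)"
    unfolding alpha_eq by (rule nn_integral_suminf[symmetric]) (simp add: c_def)
  also have "\<dots> = (\<integral>\<^sup>+a. ennreal (1 / Gamma \<nu>) * ennreal (gamma_weight \<nu> a) \<partial>lborel)"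
  proof (intro nn_integral_cong)
    fix a :: real
    have "(\<lambda>k. c k * (gamma_weight (\<nu> + h) a * (a + \<gamma>\<^sup>2) powr (- real k - h))) sums (gamma_weight \<nu> a / Gamma \<nu>)"
      using sums_divide[OF gamma_weight_mixture_sums[OF \<nu> h g, of a], of "Gamma \<nu>"]
      by (simp add: c_def mult_ac)
    then show "(\<Sum>k. ennreal (c k * (gamma_weight (\<nu> + h) a * (a + \<gamma>\<^sup>2) powr (- real k - h))))
        = ennreal (1 / Gamma \<nu>) * ennreal (gamma_weight \<nu> a)"
      using c \<nu> by (subst suminf_ennreal_eq) (auto simp: ennreal_mult'[symmetric] Gamma_real_pos less_imp_le)
  qed
  also have "\<dots> = ennreal (1 / Gamma \<nu>) * ennreal (Gamma \<nu>)"
    by (simp add: nn_integral_cmult nn_integral_gamma_weight[OF \<nu>])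
  also have "\<dots> = 1"
    using Gamma_real_pos[OF \<nu>] by (simp add: ennreal_mult'[symmetric])
  finally have "(\<lambda>k. ennreal (alpha d \<nu> \<gamma> k)) sums ennreal 1"
    using summable_sums[OF summableI, of "\<lambda>k. ennreal (alpha d \<nu> \<gamma> k)"] by simp
  then show ?thesis
    by (subst sums_ennreal[symmetric]) (use alpha_pos[OF d \<nu> \<gamma>] in \<open>auto intro: less_imp_le\<close>)
qed

section \<open>Gaussian integrals\<close>

lemma real_sqrt_power_eq_powr: "y > 0 \<Longrightarrow> sqrt y ^ n = y powr (real n / 2)"
  by (simp add: powr_half_sqrt[symmetric] powr_realpow[symmetric] powr_powr)

lemma nn_integral_exp_neg_sq:
  fixes c :: real assumes c: "c > 0"
  shows "(\<integral>\<^sup>+x. ennreal (exp (- c * x\<^sup>2)) \<partial>lborel) = ennreal (sqrt (pi / c))"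
proof -
  define s where "s = sqrt (pi / c)"
  have s: "s > 0" using c by (simp add: s_def)
  have nd: "normal_density 0 (1 / sqrt (2 * c)) x = 1 / s * exp (- c * x\<^sup>2)" for x
    using c by (simp add: normal_density_def s_def power_divide field_simps)
  have "1 = (\<integral>\<^sup>+x. ennreal (normal_density 0 (1 / sqrt (2 * c)) x) \<partial>lborel)"
    using c by (subst nn_integral_eq_integral) auto
  also have "\<dots> = (\<integral>\<^sup>+x. ennreal (1 / s) * ennreal (exp (- c * x\<^sup>2)) \<partial>lborel)"
    unfolding nd using s by (intro nn_integral_cong ennreal_mult') simp
  also have "\<dots> = ennreal (1 / s) * (\<integral>\<^sup>+x. ennreal (exp (- c * x\<^sup>2)) \<partial>lborel)"
    by (rule nn_integral_cmult) simp
  finally have "ennreal s = ennreal s * (ennreal (1 / s) * (\<integral>\<^sup>+x. ennreal (exp (- c * x\<^sup>2)) \<partial>lborel))"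
    by simp
  also have "\<dots> = (\<integral>\<^sup>+x. ennreal (exp (- c * x\<^sup>2)) \<partial>lborel)"
    using s by (simp add: mult.assoc[symmetric] ennreal_mult'[symmetric])
  finally show ?thesis by (simp add: s_def)
qed

lemma nn_integral_exp_neg_norm_sq:
  fixes c :: real assumes c: "c > 0"
  shows "(\<integral>\<^sup>+y. ennreal (exp (- c * (norm (y::'a::euclidean_space))\<^sup>2)) \<partial>lborel)
       = ennreal (sqrt (pi / c) ^ DIM('a))"
proof -
  have pointwise: "ennreal (exp (- c * (norm y)\<^sup>2)) = (\<Prod>b\<in>Basis. ennreal (exp (- c * (y \<bullet> b)\<^sup>2)))"
    for y :: 'a
  proof -
    have "(norm y)\<^sup>2 = (\<Sum>b\<in>Basis. (y \<bullet> b)\<^sup>2)"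
      unfolding power2_norm_eq_inner by (subst euclidean_inner) (simp add: power2_eq_square)
    then show ?thesis
      by (simp add: sum_distrib_left exp_sum prod_ennreal flip: sum_negf)
  qed
  have "(\<integral>\<^sup>+y. ennreal (exp (- c * (norm (y::'a))\<^sup>2)) \<partial>lborel)
      = (\<Prod>b\<in>(Basis::'a set). \<integral>\<^sup>+x. ennreal (exp (- c * x\<^sup>2)) \<partial>lborel)"
    unfolding pointwise by (rule nn_integral_lborel_prod) auto
  then show ?thesis
    using nn_integral_exp_neg_sq[OF c] c by (simp add: ennreal_power)
qed

lemma nn_integral_affine_euclidean:
  fixes f :: "'a::euclidean_space \<Rightarrow> ennreal" and c :: real
  assumes [measurable]: "f \<in> borel_measurable borel" and c: "c \<noteq> 0"
  shows "(\<integral>\<^sup>+x. f x \<partial>lborel) = ennreal (\<bar>c\<bar> ^ DIM('a)) * (\<integral>\<^sup>+x. f (t + c *\<^sub>R x) \<partial>lborel)"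
  by (subst lborel_affine[OF c, of t]) (simp add: nn_integral_density nn_integral_distr nn_integral_cmult ennreal_power)

lemma norm_sq_complete_square:
  fixes z t :: "'a::real_inner" and a q b :: real
  assumes a: "a > 0" and q: "q > 0"
  shows "a * (norm t)\<^sup>2 + q * (norm (z - b *\<^sub>R t))\<^sup>2 =
    (a + q * b\<^sup>2) * (norm (t - ((q * b) / (a + q * b\<^sup>2)) *\<^sub>R z))\<^sup>2 + q * a / (a + q * b\<^sup>2) * (norm z)\<^sup>2"
proof -
  define A where "A = a + q * b\<^sup>2"
  have A: "A > 0" using a q by (simp add: A_def add_pos_nonneg)
  define u where "u = t \<bullet> t"
  define v where "v = z \<bullet> t"
  define w where "w = z \<bullet> z"
  have e1: "(norm (z - b *\<^sub>R t))\<^sup>2 = w - 2 * b * v + b\<^sup>2 * u"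
    by (simp only: power2_norm_eq_inner) (simp add: inner_diff_left inner_diff_right u_def v_def w_def inner_commute power2_eq_square algebra_simps)
  have e2: "(norm (t - ((q * b) / A) *\<^sub>R z))\<^sup>2 = u - 2 * ((q * b) / A) * v + ((q * b) / A)\<^sup>2 * w"
    by (simp only: power2_norm_eq_inner) (simp add: inner_diff_left inner_diff_right u_def v_def w_def inner_commute power2_eq_square algebra_simps)
  have e3: "(norm t)\<^sup>2 = u" "(norm z)\<^sup>2 = w" by (simp_all add: power2_norm_eq_inner u_def w_def)
  have t1: "A * (2 * ((q * b) / A) * v) = 2 * q * b * v" using A by simp
  have t2: "A * (((q * b) / A)\<^sup>2 * w) = (q * b)\<^sup>2 / A * w" using A by (simp add: power2_eq_square)
  have s1: "A * (u - 2 * ((q * b) / A) * v + ((q * b) / A)\<^sup>2 * w) = A * u - 2 * q * b * v + (q * b)\<^sup>2 / A * w"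
    by (simp only: right_diff_distrib distrib_left t1 t2)
  have s2: "(q * b)\<^sup>2 / A * w + q * a / A * w = q * w"
  proof -
    have "(q * b)\<^sup>2 / A * w + q * a / A * w = q * w * ((q * b\<^sup>2 + a) / A)"
      by (simp add: power2_eq_square algebra_simps add_divide_distrib)
    also have "(q * b\<^sup>2 + a) / A = 1" using A by (simp add: A_def add.commute)
    finally show ?thesis by simp
  qed
  have key: "A * (u - 2 * ((q * b) / A) * v + ((q * b) / A)\<^sup>2 * w) + q * a / A * w = A * u - 2 * q * b * v + q * w"
    using s1 s2 by simp
  have "a * (norm t)\<^sup>2 + q * (norm (z - b *\<^sub>R t))\<^sup>2 = A * u - 2 * q * b * v + q * w"
    unfolding e1 e3 A_def by (simp add: algebra_simps)
  also have "\<dots> = A * (norm (t - ((q * b) / A) *\<^sub>R z))\<^sup>2 + q * a / A * (norm z)\<^sup>2"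
    unfolding e2 e3 using key by simp
  finally show ?thesis by (simp only: A_def)
qed

lemma nn_integral_exp_neg_norm_sq_product:
  fixes z :: "'a::euclidean_space" and a q b :: real
  assumes a: "a > 0" and q: "q > 0"
  shows "(\<integral>\<^sup>+t. ennreal (exp (- a * (norm t)\<^sup>2) * exp (- q * (norm (z - b *\<^sub>R t))\<^sup>2)) \<partial>lborel)
     = ennreal (sqrt (pi / (a + q * b\<^sup>2)) ^ DIM('a) * exp (- (q * a / (a + q * b\<^sup>2)) * (norm z)\<^sup>2))"
proof -
  define A where "A = a + q * b\<^sup>2"
  define w where "w = ((q * b) / A) *\<^sub>R z"
  have A: "A > 0" using a q by (simp add: A_def add_pos_nonneg)
  have eq: "exp (- a * (norm t)\<^sup>2) * exp (- q * (norm (z - b *\<^sub>R t))\<^sup>2)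
      = exp (- A * (norm (t - w))\<^sup>2) * exp (- (q * a / A) * (norm z)\<^sup>2)" for t :: 'a
  proof -
    have "- a * (norm t)\<^sup>2 + - q * (norm (z - b *\<^sub>R t))\<^sup>2 = - A * (norm (t - w))\<^sup>2 + - (q * a / A) * (norm z)\<^sup>2"
      using norm_sq_complete_square[OF a q, of t z b] unfolding A_def[symmetric] w_def by simp
    then show ?thesis by (simp flip: exp_add)
  qed
  have "(\<integral>\<^sup>+t. ennreal (exp (- a * (norm t)\<^sup>2) * exp (- q * (norm (z - b *\<^sub>R t))\<^sup>2)) \<partial>lborel)
      = (\<integral>\<^sup>+t. ennreal (exp (- A * (norm (t - w))\<^sup>2)) * ennreal (exp (- (q * a / A) * (norm z)\<^sup>2)) \<partial>lborel)"
    by (intro nn_integral_cong) (simp only: eq, rule ennreal_mult, simp_all)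
  also have "\<dots> = (\<integral>\<^sup>+t. ennreal (exp (- A * (norm (t - w))\<^sup>2)) \<partial>lborel) * ennreal (exp (- (q * a / A) * (norm z)\<^sup>2))"
    by (rule nn_integral_multc) auto
  also have "(\<integral>\<^sup>+t. ennreal (exp (- A * (norm (t - w))\<^sup>2)) \<partial>lborel)
      = ennreal (\<bar>1\<bar> ^ DIM('a)) * (\<integral>\<^sup>+t. ennreal (exp (- A * (norm (w + 1 *\<^sub>R t - w))\<^sup>2)) \<partial>lborel)"
    by (rule nn_integral_affine_euclidean) auto
  also have "\<dots> = ennreal (sqrt (pi / A) ^ DIM('a))"
    using nn_integral_exp_neg_norm_sq[OF A] by simp
  finally have fin: "(\<integral>\<^sup>+t. ennreal (exp (- a * (norm t)\<^sup>2) * exp (- q * (norm (z - b *\<^sub>R t))\<^sup>2)) \<partial>lborel)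
      = ennreal (sqrt (pi / A) ^ DIM('a)) * ennreal (exp (- (q * a / A) * (norm z)\<^sup>2))" .
  have "ennreal (sqrt (pi / A) ^ DIM('a)) * ennreal (exp (- (q * a / A) * (norm z)\<^sup>2))
     = ennreal (sqrt (pi / A) ^ DIM('a) * exp (- (q * a / A) * (norm z)\<^sup>2))"
    using A by (intro ennreal_mult[symmetric]) (simp_all add: less_imp_le)
  with fin show ?thesis unfolding A_def by (rule trans)
qed

lemma gauss_density_le:
  fixes x :: "'a::euclidean_space"
  assumes "s > 0"
  shows "gauss_density s x \<le> 1 / (s * sqrt (2 * pi)) ^ DIM('a)"
  unfolding gauss_density_def using assms by (intro divide_right_mono) auto

lemma ennreal_gauss_density_scaleR:
  fixes y :: "'a::euclidean_space"
  assumes c: "c > 0" and \<sigma>: "\<sigma> > 0"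
  shows "ennreal (\<bar>1 / c\<bar> ^ DIM('a)) * ennreal (gauss_density \<sigma> ((1 / c) *\<^sub>R y))
       = ennreal (gauss_density (c * \<sigma>) y)"
proof -
  have "(norm ((1 / c) *\<^sub>R y))\<^sup>2 / (2 * \<sigma>\<^sup>2) = (norm y)\<^sup>2 / (2 * (c * \<sigma>)\<^sup>2)"
    using c by (simp add: power_mult_distrib power_divide)
  then have "\<bar>1 / c\<bar> ^ DIM('a) * gauss_density \<sigma> ((1 / c) *\<^sub>R y) = gauss_density (c * \<sigma>) y"
    unfolding gauss_density_def using c \<sigma> by (simp add: power_mult_distrib power_divide field_simps)
  then show ?thesis by (simp add: ennreal_mult'[symmetric])
qed

section \<open>The convolution of the Student and Gaussian densities\<close>

lemma borel_measurable_student_density [measurable]: "student_density \<nu> \<in> borel_measurable borel"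
  unfolding student_density_def[abs_def] by measurable

lemma student_density_gamma_mixture:
  fixes t :: "'a::euclidean_space" and \<nu> :: real
  assumes \<nu>: "\<nu> > 0"
  shows "ennreal (student_density \<nu> t) = (\<integral>\<^sup>+a. ennreal (gamma_weight (\<nu> + real DIM('a) / 2) a
           * exp (- (norm t)\<^sup>2 * a) / (Gamma \<nu> * pi powr (real DIM('a) / 2))) \<partial>lborel)"
proof -
  define x where "x = \<nu> + real DIM('a) / 2"
  define C where "C = Gamma \<nu> * pi powr (real DIM('a) / 2)"
  have x: "x > 0" using \<nu> by (simp add: x_def add_pos_nonneg)
  have C: "C > 0" using \<nu> by (simp add: C_def Gamma_real_pos)
  have "(\<integral>\<^sup>+a. ennreal (gamma_weight x a * exp (- (norm t)\<^sup>2 * a) / C) \<partial>lborel)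
      = (\<integral>\<^sup>+a. ennreal (1 / C) * ennreal (gamma_weight x a * exp (- (norm t)\<^sup>2 * a)) \<partial>lborel)"
    using C by (intro nn_integral_cong) (simp add: ennreal_mult'[symmetric])
  also have "\<dots> = ennreal (1 / C) * ennreal (Gamma x / (1 + (norm t)\<^sup>2) powr x)"
    using nn_integral_gamma_weight_exp[OF x, of "(norm t)\<^sup>2"]
    by (simp add: nn_integral_cmult)
  also have "\<dots> = ennreal (student_density \<nu> t)"
  proof -
    have exponent: "- \<nu> - real DIM('a) / 2 = - x" by (simp add: x_def)
    have "student_density \<nu> t = 1 / C * (Gamma x / (1 + (norm t)\<^sup>2) powr x)"
      unfolding student_density_def exponent x_def[symmetric] by (simp add: powr_minus_divide C_def)
    then show ?thesis using C by (simp add: ennreal_mult'[symmetric])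
  qed
  finally show ?thesis by (simp add: x_def C_def)
qed

lemma student_density_mult_gauss_density:
  fixes t y :: "'a::euclidean_space" and \<nu> s :: real
  assumes \<nu>: "\<nu> > 0" and s: "s > 0"
  shows "ennreal (student_density \<nu> t) * ennreal (gauss_density s y)
    = (\<integral>\<^sup>+a. ennreal (gamma_weight (\<nu> + real DIM('a) / 2) a
          / (Gamma \<nu> * pi powr (real DIM('a) / 2) * (s * sqrt (2 * pi)) ^ DIM('a))
          * (exp (- a * (norm t)\<^sup>2) * exp (- (norm y)\<^sup>2 / (2 * s\<^sup>2)))) \<partial>lborel)"
proof -
  have "ennreal (student_density \<nu> t) * ennreal (gauss_density s y)
      = (\<integral>\<^sup>+a. ennreal (gamma_weight (\<nu> + real DIM('a) / 2) a * exp (- (norm t)\<^sup>2 * a)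
              / (Gamma \<nu> * pi powr (real DIM('a) / 2))) * ennreal (gauss_density s y) \<partial>lborel)"
    unfolding student_density_gamma_mixture[OF \<nu>, of t] by (rule nn_integral_multc[symmetric]) auto
  also have "\<dots> = (\<integral>\<^sup>+a. ennreal (gamma_weight (\<nu> + real DIM('a) / 2) a
          / (Gamma \<nu> * pi powr (real DIM('a) / 2) * (s * sqrt (2 * pi)) ^ DIM('a))
          * (exp (- a * (norm t)\<^sup>2) * exp (- (norm y)\<^sup>2 / (2 * s\<^sup>2)))) \<partial>lborel)"
    using \<nu> s by (intro nn_integral_cong) (simp add: ennreal_mult'[symmetric] gauss_density_def Gamma_real_pos mult_ac)
  finally show ?thesis .
qed

lemma nn_integral_student_gauss_mixture:
  fixes z :: "'a::euclidean_space" and \<nu> s b :: real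
  assumes \<nu>: "\<nu> > 0" and s: "s > 0"
  defines "g \<equiv> b\<^sup>2 / (2 * s\<^sup>2)" and "r \<equiv> (norm z)\<^sup>2 / (2 * s\<^sup>2)"
    and "C \<equiv> Gamma \<nu> * pi powr (real DIM('a) / 2) * (s * sqrt (2 * pi)) ^ DIM('a)"
  shows "(\<integral>\<^sup>+t. ennreal (student_density \<nu> t) * ennreal (gauss_density s (z - b *\<^sub>R t)) \<partial>lborel)
       = (\<integral>\<^sup>+a. ennreal (gamma_weight (\<nu> + real DIM('a) / 2) a / C
            * (sqrt (pi / (a + g)) ^ DIM('a) * exp (- (r * a / (a + g))))) \<partial>lborel)"
proof -
  define q where "q = 1 / (2 * s\<^sup>2)"
  define w where "w a = gamma_weight (\<nu> + real DIM('a) / 2) a / C" for a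
  define E where "E a t = exp (- a * (norm t)\<^sup>2) * exp (- q * (norm (z - b *\<^sub>R t))\<^sup>2)" for a and t :: 'a
  have C: "C > 0" using \<nu> s by (simp add: C_def Gamma_real_pos)
  have q: "q > 0" using s by (simp add: q_def)
  have w: "w a \<ge> 0" for a using C by (simp add: w_def)
  have "(\<integral>\<^sup>+t. ennreal (student_density \<nu> t) * ennreal (gauss_density s (z - b *\<^sub>R t)) \<partial>lborel)
      = (\<integral>\<^sup>+t. \<integral>\<^sup>+a. ennreal (w a * E a t) \<partial>lborel \<partial>lborel)"
    unfolding student_density_mult_gauss_density[OF \<nu> s] by (simp add: w_def C_def E_def q_def)
  also have "\<dots> = (\<integral>\<^sup>+a. \<integral>\<^sup>+t. ennreal (w a * E a t) \<partial>lborel \<partial>lborel)"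
    unfolding w_def E_def by (rule lborel_pair.Fubini') measurable
  also have "\<dots> = (\<integral>\<^sup>+a. ennreal (w a * (sqrt (pi / (a + g)) ^ DIM('a) * exp (- (r * a / (a + g))))) \<partial>lborel)"
  proof (intro nn_integral_cong)
    fix a :: real
    show "(\<integral>\<^sup>+t. ennreal (w a * E a t) \<partial>lborel)
        = ennreal (w a * (sqrt (pi / (a + g)) ^ DIM('a) * exp (- (r * a / (a + g)))))"
    proof (cases "a > 0")
      case True
      have qb: "q * b\<^sup>2 = g" by (simp add: q_def g_def)
      have exponent: "- (q * a / (a + g)) * (norm z)\<^sup>2 = - (r * a / (a + g))"
        by (simp add: q_def r_def)
      have "(\<integral>\<^sup>+t. ennreal (E a t) \<partial>lborel) = ennreal (sqrt (pi / (a + g)) ^ DIM('a) * exp (- (r * a / (a + g))))"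
        using nn_integral_exp_neg_norm_sq_product[OF True q, of z b] unfolding E_def qb exponent .
      then show ?thesis
        unfolding ennreal_mult'[OF w] by (simp add: nn_integral_cmult E_def)
    qed (simp add: w_def gamma_weight_def)
  qed
  finally show ?thesis by (simp add: w_def)
qed

lemma gamma_weight_exp_ratio_sums:
  fixes r g x a :: real and n :: nat
  assumes g: "g > 0"
  shows "(\<lambda>k. exp (- r) * (r * g) ^ k / fact k * (gamma_weight x a * (a + g) powr (- real k - real n / 2)))
           sums (gamma_weight x a / pi powr (real n / 2) * (sqrt (pi / (a + g)) ^ n * exp (- (r * a / (a + g)))))"
proof (cases "a > 0")
  case True
  have ag: "a + g > 0" using True g by simp
  have "sqrt (pi / (a + g)) ^ n = pi powr (real n / 2) * (a + g) powr (- (real n / 2))"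
    using ag by (simp add: real_sqrt_power_eq_powr powr_divide powr_minus_divide)
  moreover have "exp (- (r * a / (a + g))) = exp (- r) * exp (r * g / (a + g))"
    using ag by (simp add: field_simps flip: exp_add)
  ultimately have limit: "gamma_weight x a / pi powr (real n / 2) * (sqrt (pi / (a + g)) ^ n * exp (- (r * a / (a + g))))
      = gamma_weight x a * exp (- r) * ((a + g) powr (- (real n / 2)) * exp (r * g / (a + g)))"
    by simp
  have "exp (- r) * (r * g) ^ k / fact k * (gamma_weight x a * (a + g) powr (- real k - real n / 2))
      = gamma_weight x a * exp (- r) * ((r * g) ^ k / fact k * (a + g) powr (- real k - real n / 2))" for k
    by simp
  then show ?thesis
    unfolding limit by (simp only: sums_mult powr_exp_series_sums[OF ag, of "r * g" "real n / 2"])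
qed (simp add: gamma_weight_def)

lemma alpha_mult_gk:
  fixes z :: "'a::euclidean_space" and \<nu> \<gamma> s :: real
  assumes s: "s > 0"
  defines "r \<equiv> (norm z)\<^sup>2 / (2 * s\<^sup>2)"
  shows "alpha DIM('a) \<nu> \<gamma> k * gk k s z
    = exp (- r) * (r * \<gamma>\<^sup>2) ^ k / fact k
      * (LINT a:{0<..}|lborel. exp (- a) * a powr (\<nu> + real DIM('a) / 2 - 1)
                                * (a + \<gamma>\<^sup>2) powr (- real k - real DIM('a) / 2))
      / (Gamma \<nu> * (s * sqrt (2 * pi)) ^ DIM('a))"
proof -
  define A where "A = Gamma (real k + real DIM('a) / 2)"
  define B where "B = Gamma (real DIM('a) / 2)"
  define K where "K = (s * sqrt (2 * pi)) ^ DIM('a)"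
  define L where "L = (LINT a:{0<..}|lborel. exp (- a) * a powr (\<nu> + real DIM('a) / 2 - 1)
                                * (a + \<gamma>\<^sup>2) powr (- real k - real DIM('a) / 2))"
  have nonzero: "A \<noteq> 0" "B \<noteq> 0" "K \<noteq> 0"
    using s by (auto simp: A_def B_def K_def intro!: less_imp_neq[symmetric] Gamma_real_pos add_nonneg_pos)
  have alpha_eq: "alpha DIM('a) \<nu> \<gamma> k = A / (fact k * B * Gamma \<nu>) * (\<gamma>\<^sup>2) ^ k * L"
    by (simp add: alpha_def A_def B_def L_def power_mult)
  have gk_eq: "gk k s z = B / (A * K) * r ^ k * exp (- r)"
    by (simp add: gk_def A_def B_def K_def r_def)
  show ?thesis
    unfolding alpha_eq gk_eq L_def[symmetric] K_def[symmetric] using nonzero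
    by (simp add: power_mult_distrib field_simps)
qed

lemma nn_integral_student_gauss_series:
  fixes z :: "'a::euclidean_space" and \<nu> s b :: real
  assumes \<nu>: "\<nu> > 0" and s: "s > 0" and b: "b > 0"
  defines "\<gamma> \<equiv> b / (s * sqrt 2)"
  shows "(\<integral>\<^sup>+t. ennreal (student_density \<nu> t) * ennreal (gauss_density s (z - b *\<^sub>R t)) \<partial>lborel)
       = (\<Sum>k. ennreal (alpha DIM('a) \<nu> \<gamma> k * gk k s z))"
proof -
  define x where "x = \<nu> + real DIM('a) / 2"
  define C where "C = Gamma \<nu> * (s * sqrt (2 * pi)) ^ DIM('a)"
  define r where "r = (norm z)\<^sup>2 / (2 * s\<^sup>2)"
  define f where "f k a = exp (- r) * (r * \<gamma>\<^sup>2) ^ k / fact k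
                    * (gamma_weight x a * (a + \<gamma>\<^sup>2) powr (- real k - real DIM('a) / 2)) / C" for k a
  have C: "C > 0" using \<nu> s by (simp add: C_def Gamma_real_pos)
  have \<gamma>: "\<gamma>\<^sup>2 > 0" using s b by (simp add: \<gamma>_def)
  have f_nonneg: "f k a \<ge> 0" for k a
    using C by (simp add: f_def r_def)
  have term_integral: "(\<integral>\<^sup>+a. ennreal (f k a) \<partial>lborel) = ennreal (alpha DIM('a) \<nu> \<gamma> k * gk k s z)" for k
  proof -
    have "(\<integral>\<^sup>+a. ennreal (f k a) \<partial>lborel) = ennreal (exp (- r) * (r * \<gamma>\<^sup>2) ^ k / fact k / C)
        * (\<integral>\<^sup>+a. ennreal (gamma_weight x a * (a + \<gamma>\<^sup>2) powr (- real k - real DIM('a) / 2)) \<partial>lborel)"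
      using C by (subst nn_integral_cmult[symmetric]) (auto simp: f_def r_def ennreal_mult'[symmetric] intro!: nn_integral_cong)
    also have "\<dots> = ennreal (alpha DIM('a) \<nu> \<gamma> k * gk k s z)"
      using C \<nu> \<gamma> by (simp add: nn_integral_gamma_weight_powr x_def add_pos_nonneg alpha_mult_gk[OF s]
          r_def C_def ennreal_mult'[symmetric])
    finally show ?thesis .
  qed
  have "(\<integral>\<^sup>+t. ennreal (student_density \<nu> t) * ennreal (gauss_density s (z - b *\<^sub>R t)) \<partial>lborel)
      = (\<integral>\<^sup>+a. ennreal (gamma_weight x a / pi powr (real DIM('a) / 2)
            * (sqrt (pi / (a + \<gamma>\<^sup>2)) ^ DIM('a) * exp (- (r * a / (a + \<gamma>\<^sup>2)))) / C) \<partial>lborel)"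
    using nn_integral_student_gauss_mixture[OF \<nu> s, of z b]
    by (simp add: \<gamma>_def x_def C_def r_def power_divide power_mult_distrib mult_ac)
  also have "\<dots> = (\<integral>\<^sup>+a. (\<Sum>k. ennreal (f k a)) \<partial>lborel)"
    unfolding f_def using f_nonneg[unfolded f_def]
    by (intro nn_integral_cong suminf_ennreal_eq[symmetric] sums_divide gamma_weight_exp_ratio_sums \<gamma>)
  also have "\<dots> = (\<Sum>k. \<integral>\<^sup>+a. ennreal (f k a) \<partial>lborel)"
    by (rule nn_integral_suminf) (simp add: f_def)
  finally show ?thesis by (simp only: term_integral)
qed

lemma gk_nonneg: "s > 0 \<Longrightarrow> gk k s z \<ge> 0"
  unfolding gk_def by (intro mult_nonneg_nonneg divide_nonneg_nonneg)
    (auto intro!: less_imp_le[OF Gamma_real_pos] add_nonneg_pos)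

lemma nn_integral_mult_gauss_density_finite:
  fixes f :: "'a::euclidean_space \<Rightarrow> ennreal"
  assumes [measurable]: "f \<in> borel_measurable borel" and s: "s > 0"
    and f: "(\<integral>\<^sup>+t. f t \<partial>lborel) < \<infinity>"
  shows "(\<integral>\<^sup>+t. f t * ennreal (gauss_density s (z - b *\<^sub>R t)) \<partial>lborel) < \<infinity>"
proof -
  have "(\<integral>\<^sup>+t. f t * ennreal (gauss_density s (z - b *\<^sub>R t)) \<partial>lborel)
      \<le> (\<integral>\<^sup>+t. f t * ennreal (1 / (s * sqrt (2 * pi)) ^ DIM('a)) \<partial>lborel)"
    using s by (intro nn_integral_mono mult_left_mono ennreal_leI gauss_density_le) auto
  also have "\<dots> = (\<integral>\<^sup>+t. f t \<partial>lborel) * ennreal (1 / (s * sqrt (2 * pi)) ^ DIM('a))"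
    by (rule nn_integral_multc) simp
  also have "\<dots> < \<infinity>"
    using f by (simp add: ennreal_mult_less_top)
  finally show ?thesis .
qed

section \<open>Scaled sums of independent random vectors\<close>

lemma nn_integral_scaleR_add:
  fixes F G :: "'a::euclidean_space \<Rightarrow> ennreal" and c :: real
  assumes [measurable]: "F \<in> borel_measurable borel" "G \<in> borel_measurable borel" and c: "c \<noteq> 0"
  shows "(\<integral>\<^sup>+x. F x * G (c *\<^sub>R x + t) \<partial>lborel)
       = (\<integral>\<^sup>+z. ennreal (\<bar>1 / c\<bar> ^ DIM('a)) * F ((1 / c) *\<^sub>R (z - t)) * G z \<partial>lborel)"
proof -
  have arg: "(- (1 / c)) *\<^sub>R t + (1 / c) *\<^sub>R z = (1 / c) *\<^sub>R (z - t)" for z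
    by (simp add: algebra_simps)
  have "(\<integral>\<^sup>+x. F x * G (c *\<^sub>R x + t) \<partial>lborel)
      = ennreal (\<bar>1 / c\<bar> ^ DIM('a)) * (\<integral>\<^sup>+z. F ((1 / c) *\<^sub>R (z - t)) * G (c *\<^sub>R ((1 / c) *\<^sub>R (z - t)) + t) \<partial>lborel)"
    using nn_integral_affine_euclidean[of "\<lambda>x. F x * G (c *\<^sub>R x + t)" "1 / c" "- (1 / c) *\<^sub>R t"] c
    unfolding arg by simp
  also have "\<dots> = (\<integral>\<^sup>+z. ennreal (\<bar>1 / c\<bar> ^ DIM('a)) * F ((1 / c) *\<^sub>R (z - t)) * G z \<partial>lborel)"
    using c by (subst nn_integral_cmult[symmetric]) (auto simp: mult.assoc)
  finally show ?thesis .
qed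

lemma (in prob_space) distr_pair_indep_density:
  fixes X Y :: "'a \<Rightarrow> 'b::euclidean_space"
  assumes indep: "indep_var borel X borel Y"
    and X: "distributed M lborel X f" and Y: "distributed M lborel Y g"
  shows "distr M (borel \<Otimes>\<^sub>M borel) (\<lambda>\<omega>. (X \<omega>, Y \<omega>)) = density (lborel \<Otimes>\<^sub>M lborel) (\<lambda>(x, y). f x * g y)"
proof -
  have distr_X: "distr M borel X = density lborel f" and distr_Y: "distr M borel Y = density lborel g"
    using distributed_distr_eq_density[OF X] distributed_distr_eq_density[OF Y] by (simp_all cong: distr_cong)
  have "sigma_finite_measure (density lborel g)"
    unfolding distr_Y[symmetric] using distributed_measurable[OF Y]
    by (simp add: prob_space_distr prob_space_imp_sigma_finite)
  then show ?thesis
    using indep distributed_borel_measurable[OF X] distributed_borel_measurable[OF Y]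
    unfolding indep_var_distribution_eq distr_X distr_Y
    by (simp add: pair_measure_density lborel.sigma_finite_measure_axioms)
qed

lemma (in prob_space) distributed_scaleR_add_indep:
  fixes X Y :: "'a \<Rightarrow> 'b::euclidean_space" and f g :: "'b \<Rightarrow> ennreal" and c e :: real
  assumes indep: "indep_var borel X borel Y"
    and X: "distributed M lborel X f" and Y: "distributed M lborel Y g" and c: "c \<noteq> 0"
  shows "distributed M lborel (\<lambda>\<omega>. c *\<^sub>R X \<omega> + e *\<^sub>R Y \<omega>)
           (\<lambda>z. \<integral>\<^sup>+y. ennreal (\<bar>1 / c\<bar> ^ DIM('b)) * f ((1 / c) *\<^sub>R (z - e *\<^sub>R y)) * g y \<partial>lborel)"
proof -
  define Z where "Z \<omega> = c *\<^sub>R X \<omega> + e *\<^sub>R Y \<omega>" for \<omega>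
  define k where "k z y = ennreal (\<bar>1 / c\<bar> ^ DIM('b)) * f ((1 / c) *\<^sub>R (z - e *\<^sub>R y))" for z y
  define h where "h z = (\<integral>\<^sup>+y. k z y * g y \<partial>lborel)" for z
  have [measurable]: "f \<in> borel_measurable borel" "g \<in> borel_measurable borel"
    using distributed_borel_measurable[OF X] distributed_borel_measurable[OF Y] by simp_all
  have [measurable]: "X \<in> measurable M borel" "Y \<in> measurable M borel"
    using distributed_measurable[OF X] distributed_measurable[OF Y] by simp_all
  have [measurable]: "Z \<in> measurable M borel"
    unfolding Z_def[abs_def] by measurable
  have [measurable]: "(\<lambda>(z, y). k z y) \<in> borel_measurable (borel \<Otimes>\<^sub>M borel)" "h \<in> borel_measurable borel"
    unfolding h_def[abs_def] k_def[abs_def] by measurable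
  have "distr M lborel Z = density lborel h"
  proof (rule measure_eqI)
    fix A assume "A \<in> sets (distr M lborel Z)"
    then have A[measurable]: "A \<in> sets borel" by simp
    have "emeasure (distr M lborel Z) A
        = (\<integral>\<^sup>+p. indicator A (case p of (x, y) \<Rightarrow> c *\<^sub>R x + e *\<^sub>R y) \<partial>distr M (borel \<Otimes>\<^sub>M borel) (\<lambda>\<omega>. (X \<omega>, Y \<omega>)))"
      by (simp add: Z_def emeasure_distr nn_integral_distr nn_integral_indicator[symmetric] del: nn_integral_indicator)
    also have "\<dots> = (\<integral>\<^sup>+y. \<integral>\<^sup>+x. (f x * g y) * indicator A (c *\<^sub>R x + e *\<^sub>R y) \<partial>lborel \<partial>lborel)"
      unfolding distr_pair_indep_density[OF indep X Y]
      by (simp add: nn_integral_density lborel_pair.nn_integral_snd[symmetric] split_beta')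
    also have "\<dots> = (\<integral>\<^sup>+y. \<integral>\<^sup>+z. k z y * g y * indicator A z \<partial>lborel \<partial>lborel)"
    proof (rule nn_integral_cong)
      fix y :: 'b
      show "(\<integral>\<^sup>+x. (f x * g y) * indicator A (c *\<^sub>R x + e *\<^sub>R y) \<partial>lborel)
          = (\<integral>\<^sup>+z. k z y * g y * indicator A z \<partial>lborel)"
        using nn_integral_scaleR_add[of "\<lambda>x. f x * g y" "indicator A" c "e *\<^sub>R y"] c
        by (simp add: k_def mult.assoc)
    qed
    also have "\<dots> = (\<integral>\<^sup>+z. h z * indicator A z \<partial>lborel)"
      unfolding h_def by (subst lborel_pair.Fubini') (auto intro!: nn_integral_cong nn_integral_multc)
    finally show "emeasure (distr M lborel Z) A = emeasure (density lborel h) A"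
      by (simp add: emeasure_density)
  qed simp
  then show ?thesis
    unfolding distributed_def by (simp add: Z_def[abs_def] h_def[abs_def] k_def)
qed

lemma (in prob_space) distributed_nn_integral_eq_1:
  assumes "distributed M N X f"
  shows "(\<integral>\<^sup>+x. f x \<partial>N) = 1"
  using distributed_nn_integral[OF assms, of "\<lambda>_. 1"] by (simp add: emeasure_space_1)

theorem proposition2:
  fixes M :: "'b measure" and X T :: "'b \<Rightarrow> 'a::euclidean_space"
    and \<nu> \<sigma> a1 a2 :: real
  assumes "prob_space M"
    and "\<nu> > 0" and "\<sigma> > 0" and "a1 > 0" and "a2 > 0"
    and "distributed M lborel X (\<lambda>x. ennreal (gauss_density \<sigma> x))"
    and "distributed M lborel T (\<lambda>t. ennreal (student_density \<nu> t))"
    and "prob_space.indep_var M borel X borel T"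
  shows "let \<gamma> = a2 / (\<sigma> * sqrt 2 * a1) in
           (\<forall>z::'a. summable (\<lambda>k. alpha DIM('a) \<nu> \<gamma> k * gk k (a1 * \<sigma>) z))
         \<and> distributed M lborel (\<lambda>\<omega>. a1 *\<^sub>R X \<omega> + a2 *\<^sub>R T \<omega>)
             (\<lambda>z. ennreal (\<Sum>k. alpha DIM('a) \<nu> \<gamma> k * gk k (a1 * \<sigma>) z))
         \<and> (\<forall>k. alpha DIM('a) \<nu> \<gamma> k > 0)
         \<and> (\<lambda>k. alpha DIM('a) \<nu> \<gamma> k) sums 1"
proof -
  interpret prob_space M by fact
  note \<nu> = \<open>\<nu> > 0\<close> and \<sigma> = \<open>\<sigma> > 0\<close> and a1 = \<open>a1 > 0\<close> and a2 = \<open>a2 > 0\<close>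
  define \<gamma> where "\<gamma> = a2 / (\<sigma> * sqrt 2 * a1)"
  define h where "h z = (\<integral>\<^sup>+t. ennreal (student_density \<nu> t) * ennreal (gauss_density (a1 * \<sigma>) (z - a2 *\<^sub>R t)) \<partial>lborel)"
    for z :: 'a
  have \<gamma>: "\<gamma> > 0" using \<sigma> a1 a2 by (simp add: \<gamma>_def)
  have a1\<sigma>: "a1 * \<sigma> > 0" using a1 \<sigma> by simp
  have terms_nonneg: "alpha DIM('a) \<nu> \<gamma> k * gk k (a1 * \<sigma>) z \<ge> 0" for k and z :: 'a
    using alpha_pos[OF _ \<nu> \<gamma>, of "DIM('a)" k] gk_nonneg[OF a1\<sigma>, of k z] by simp
  have h_series: "h z = (\<Sum>k. ennreal (alpha DIM('a) \<nu> \<gamma> k * gk k (a1 * \<sigma>) z))" for z :: 'a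
    using nn_integral_student_gauss_series[OF \<nu> a1\<sigma> a2, of z] by (simp add: h_def \<gamma>_def mult_ac)
  have h_finite: "h z < \<infinity>" for z :: 'a
    unfolding h_def using a1\<sigma> distributed_nn_integral_eq_1[OF assms(7)]
    by (intro nn_integral_mult_gauss_density_finite) auto
  have summable: "summable (\<lambda>k. alpha DIM('a) \<nu> \<gamma> k * gk k (a1 * \<sigma>) z)" for z :: 'a
    using h_finite[of z] unfolding h_series by (intro summable_suminf_not_top terms_nonneg) simp
  have "distributed M lborel (\<lambda>\<omega>. a1 *\<^sub>R X \<omega> + a2 *\<^sub>R T \<omega>) (\<lambda>z. \<integral>\<^sup>+t.
      ennreal (\<bar>1 / a1\<bar> ^ DIM('a)) * ennreal (gauss_density \<sigma> ((1 / a1) *\<^sub>R (z - a2 *\<^sub>R t)))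
        * ennreal (student_density \<nu> t) \<partial>lborel)"
    using assms(6-8) a1 by (intro distributed_scaleR_add_indep) auto
  then have "distributed M lborel (\<lambda>\<omega>. a1 *\<^sub>R X \<omega> + a2 *\<^sub>R T \<omega>) h"
    unfolding h_def[abs_def] ennreal_gauss_density_scaleR[OF a1 \<sigma>] by (simp only: mult.commute)
  moreover have "h = (\<lambda>z. ennreal (\<Sum>k. alpha DIM('a) \<nu> \<gamma> k * gk k (a1 * \<sigma>) z))"
    using h_series suminf_ennreal2[OF terms_nonneg summable] by auto
  ultimately show ?thesis
    unfolding Let_def \<gamma>_def[symmetric] using summable alpha_pos[OF _ \<nu> \<gamma>] alpha_sums[OF _ \<nu> \<gamma>] by auto
qed

end
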